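(* Let $X\subset\mathbb{R}$ with the Euclidean metric, and let $(X,T_1,\mu_1)$ and $(X,T_2,\mu_2)$ be two probability preserving systems which are both exponentially mixing for $BV$ against $L^\infty$. Let $(r_n)_n$ be a decreasing sequence of positive numbers and suppose that for some $\varepsilon>0$ there is a constant $c_0>0$ such that for all $n$ sufficiently large \[ \int \mu_1(B(y,r_n))\,d\mu_2(y) \ge c_0\,\frac{(\log n)^3(\log\log n)^{1+\varepsilon}}{n^2}, \] and there is a constant $c_1>0$ such that for all $n$ sufficiently large and $i=1,2$, \[ \frac{\bigl(\int \mu_i(B(y,r_n))\,d\mu_i(y)\bigr)^{1/2}}{\int \mu_1(B(y,r_n))\,d\mu_2(y)} \le c_1\,\frac{n}{(\log n)^2(\log\log n)^{1+\varepsilon}}. \] Then $(\mu_1\times\mu_2)\bigl(\liminf_n E_{n,r_n}^{T_1,T_2}\bigr)=1$.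
   Context: A measure preserving system $(X,T,\mu)$ with $X\subset\mathbb{R}$ is exponentially mixing for $BV$ against $L^\infty$ if there are $C,\theta>0$ such that for all $\psi$ of bounded variation and all $\varphi\in L^\infty(\mu)$ and all $n\ge 0$, $\bigl|\int\psi\cdot\varphi\circ T^n\,d\mu-\int\psi\,d\mu\int\varphi\,d\mu\bigr|\le C\|\psi\|_{BV}\|\varphi\|_{L^\infty}e^{-\theta n}$. For $n\in\mathbb{N}$ and $r>0$, $E_{n,r}^{T_1,T_2}:=\{(x,y)\in X\times X : |T_1^i x- T_2^j y|<r \text{ for some } 0\le i,j<n\}$; $E_{n,r_n}^{T_1,T_2}$ denotes this set with $r=r_n$. $B(y,r)$ is the open ball of radius $r$ about $y$. *)

theory Defs
  imports "HOL-Probability.Probability"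
begin

definition measure_preserving_map :: "'a measure \<Rightarrow> ('a \<Rightarrow> 'a) \<Rightarrow> bool" where
  "measure_preserving_map M T \<longleftrightarrow> T \<in> measurable M M \<and> distr M M T = M"

definition total_variation_on :: "real set \<Rightarrow> (real \<Rightarrow> real) \<Rightarrow> ereal" where
  "total_variation_on X \<psi> =
     (SUP xs \<in> {xs. sorted_wrt (<) xs \<and> set xs \<subseteq> X}.
        ereal (\<Sum>i<length xs - 1. \<bar>\<psi> (xs ! Suc i) - \<psi> (xs ! i)\<bar>))"

definition bounded_variation_on :: "real set \<Rightarrow> (real \<Rightarrow> real) \<Rightarrow> bool" where
  "bounded_variation_on X \<psi> \<longleftrightarrow> total_variation_on X \<psi> < \<infinity> \<and> bounded (\<psi> ` X)"

definition BV_norm :: "real set \<Rightarrow> (real \<Rightarrow> real) \<Rightarrow> real" where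
  "BV_norm X \<psi> = real_of_ereal (total_variation_on X \<psi>) + (SUP x\<in>X. \<bar>\<psi> x\<bar>)"

definition in_Linf :: "'a measure \<Rightarrow> ('a \<Rightarrow> real) \<Rightarrow> bool" where
  "in_Linf M \<phi> \<longleftrightarrow> \<phi> \<in> borel_measurable M \<and> esssup M (\<lambda>x. ereal \<bar>\<phi> x\<bar>) < \<infinity>"

definition Linf_norm :: "'a measure \<Rightarrow> ('a \<Rightarrow> real) \<Rightarrow> real" where
  "Linf_norm M \<phi> = real_of_ereal (esssup M (\<lambda>x. ereal \<bar>\<phi> x\<bar>))"

definition exp_mixing_BV_Linf :: "real set \<Rightarrow> real measure \<Rightarrow> (real \<Rightarrow> real) \<Rightarrow> bool" where
  "exp_mixing_BV_Linf X M T \<longleftrightarrow>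
     (\<exists>C \<theta>. C > 0 \<and> \<theta> > 0 \<and>
       (\<forall>\<psi> \<phi> (n::nat). \<psi> \<in> borel_measurable M \<longrightarrow> bounded_variation_on X \<psi> \<longrightarrow> in_Linf M \<phi> \<longrightarrow>
          \<bar>(\<integral>x. \<psi> x * \<phi> ((T ^^ n) x) \<partial>M) - (\<integral>x. \<psi> x \<partial>M) * (\<integral>x. \<phi> x \<partial>M)\<bar>
            \<le> C * BV_norm X \<psi> * Linf_norm M \<phi> * exp (- \<theta> * real n)))"

definition E_set :: "real set \<Rightarrow> (real \<Rightarrow> real) \<Rightarrow> (real \<Rightarrow> real) \<Rightarrow> nat \<Rightarrow> real \<Rightarrow> (real \<times> real) set" where
  "E_set X T1 T2 n r = {(x, y) \<in> X \<times> X. \<exists>i<n. \<exists>j<n. \<bar>(T1 ^^ i) x - (T2 ^^ j) y\<bar> < r}"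

end

theory Submission
  imports Defs
begin

text \<open>
  Let \<open>S_m(x, y)\<close> be the number of pairs \<open>i, j < m\<close> with \<open>|T_1^i x - T_2^j y| < \<rho>\<close>. The complement
  of \<open>E_{m,\<rho>}\<close> is \<open>{S_m = 0}\<close>, and \<open>E S_m = m^2 I\<close> with \<open>I = \<integral> \<mu>_1(B(y, \<rho>)) d\<mu>_2(y)\<close>, so by
  Chebyshev \<open>P(S_m = 0) \<le> (E S_m^2 - (E S_m)^2) / (E S_m)^2\<close>. In \<open>E S_m^2\<close> the term of two index
  pairs \<open>(i, j), (k, l)\<close> is at most \<open>I^2\<close> plus a mixing error when both \<open>|i - k|\<close> and \<open>|j - l|\<close>
  exceed a gap \<open>g\<close> (integrate first in \<open>x\<close>, then in \<open>y\<close>); it is at most \<open>2 J^{1/2} I\<close> when only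
  one of them is small, because \<open>\<mu>(B(y, \<rho>)) \<le> 2 (\<integral> \<mu>(B(z, \<rho>)) d\<mu>(z))^{1/2}\<close>; and it is at most
  \<open>I\<close> when both are small. For \<open>m = 2^k\<close>, \<open>\<rho> = r_{2^{k+1}}\<close> and \<open>g\<close> a large multiple of \<open>k\<close>, the
  hypotheses turn this into \<open>O(1 / (k (log k)^{1+\<epsilon>}) + 2^{-k})\<close>, which is summable. Borel--Cantelli
  over the dyadic blocks and the monotonicity of \<open>E_{n,r}\<close> in \<open>n\<close> and \<open>r\<close> conclude.
\<close>

section \<open>Differences of monotone functions\<close>

text \<open>The test functions fed to the mixing hypothesis: indicators of balls and \<open>y \<mapsto> \<mu>(B(y, \<rho>))\<close>.\<close>
definition unit_mono_diff :: "(real \<Rightarrow> real) \<Rightarrow> bool" where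
  "unit_mono_diff \<psi> \<longleftrightarrow>
     (\<exists>F G. mono F \<and> mono G \<and> (\<forall>x. 0 \<le> F x \<and> F x \<le> 1) \<and> (\<forall>x. 0 \<le> G x \<and> G x \<le> 1)
        \<and> (\<forall>x. \<psi> x = F x - G x)) \<and> (\<forall>x. 0 \<le> \<psi> x \<and> \<psi> x \<le> 1)"

lemma unit_mono_diff_bounds: "unit_mono_diff \<psi> \<Longrightarrow> 0 \<le> \<psi> x \<and> \<psi> x \<le> 1"
  unfolding unit_mono_diff_def by blast

lemma borel_measurable_unit_mono_diff:
  assumes "unit_mono_diff \<psi>"
  shows "\<psi> \<in> borel_measurable borel"
proof -
  obtain F G where FG: "mono F" "mono G" "\<And>x. \<psi> x = F x - G x"
    using assms unfolding unit_mono_diff_def by blast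
  have "F \<in> borel_measurable borel" "G \<in> borel_measurable borel"
    using FG borel_measurable_mono by auto
  then have "(\<lambda>x. F x - G x) \<in> borel_measurable borel" by measurable
  moreover have "\<psi> = (\<lambda>x. F x - G x)" using FG by auto
  ultimately show ?thesis by simp
qed

lemma unit_mono_diff_indicator_ball:
  assumes "r > 0"
  shows "unit_mono_diff (indicator (ball a r))"
proof -
  define F where "F = (indicator {a - r<..} :: real \<Rightarrow> real)"
  define G where "G = (indicator {a + r..} :: real \<Rightarrow> real)"
  have "mono F" "mono G" unfolding F_def G_def mono_def by (auto simp: indicator_def)
  moreover have "\<forall>x. indicator (ball a r) x = F x - G x"
    using assms unfolding F_def G_def by (auto simp: indicator_def dist_real_def abs_less_iff)
  moreover have "\<forall>x. 0 \<le> F x \<and> F x \<le> 1" "\<forall>x. 0 \<le> G x \<and> G x \<le> 1"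
    unfolding F_def G_def by (auto simp: indicator_def)
  moreover have "\<forall>x. 0 \<le> (indicator (ball a r) x :: real) \<and> (indicator (ball a r) x :: real) \<le> 1"
    by (auto simp: indicator_def)
  ultimately show ?thesis unfolding unit_mono_diff_def by blast
qed

lemma total_variation_on_unit_mono_diff:
  assumes "unit_mono_diff \<psi>"
  shows "total_variation_on X \<psi> \<le> 2" "0 \<le> total_variation_on X \<psi>"
proof -
  obtain F G where FG: "mono F" "mono G" "\<And>x. 0 \<le> F x \<and> F x \<le> 1" "\<And>x. 0 \<le> G x \<and> G x \<le> 1"
     "\<And>x. \<psi> x = F x - G x"
    using assms unfolding unit_mono_diff_def by metis
  show "total_variation_on X \<psi> \<le> 2"
    unfolding total_variation_on_def
  proof (rule SUP_least)
    fix xs :: "real list" assume xs: "xs \<in> {xs. sorted_wrt (<) xs \<and> set xs \<subseteq> X}"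
    define n where "n = length xs - 1"
    have step: "xs ! i \<le> xs ! Suc i" if "i < n" for i
      using xs that sorted_wrt_nth_less[of "(<)" xs i "Suc i"] unfolding n_def by fastforce
    have "(\<Sum>i<n. \<bar>\<psi> (xs ! Suc i) - \<psi> (xs ! i)\<bar>)
        \<le> (\<Sum>i<n. (F (xs ! Suc i) - F (xs ! i)) + (G (xs ! Suc i) - G (xs ! i)))"
    proof (rule sum_mono)
      fix i assume "i \<in> {..<n}"
      then have "F (xs ! i) \<le> F (xs ! Suc i)" "G (xs ! i) \<le> G (xs ! Suc i)"
        using step FG(1,2) by (auto simp: mono_def)
      then show "\<bar>\<psi> (xs ! Suc i) - \<psi> (xs ! i)\<bar>
          \<le> (F (xs ! Suc i) - F (xs ! i)) + (G (xs ! Suc i) - G (xs ! i))"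
        using FG(5) by auto
    qed
    also have "\<dots> = (F (xs ! n) - F (xs ! 0)) + (G (xs ! n) - G (xs ! 0))"
      by (simp add: sum.distrib sum_lessThan_telescope[where f = "\<lambda>i. F (xs ! i)"]
            sum_lessThan_telescope[where f = "\<lambda>i. G (xs ! i)"])
    also have "\<dots> \<le> 2"
      using FG(3)[of "xs ! n"] FG(3)[of "xs ! 0"] FG(4)[of "xs ! n"] FG(4)[of "xs ! 0"] by linarith
    finally show "ereal (\<Sum>i<length xs - 1. \<bar>\<psi> (xs ! Suc i) - \<psi> (xs ! i)\<bar>) \<le> 2"
      unfolding n_def by simp
  qed
  show "0 \<le> total_variation_on X \<psi>"
    unfolding total_variation_on_def by (rule SUP_upper2[of "[]"]) auto
qed

lemma BV_norm_unit_mono_diff: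
  assumes "unit_mono_diff \<psi>" "X \<noteq> {}"
  shows "bounded_variation_on X \<psi>" "0 \<le> BV_norm X \<psi>" "BV_norm X \<psi> \<le> 3"
proof -
  have b: "0 \<le> \<psi> x \<and> \<psi> x \<le> 1" for x using unit_mono_diff_bounds[OF assms(1)] .
  have tv: "total_variation_on X \<psi> \<le> 2" "0 \<le> total_variation_on X \<psi>"
    using total_variation_on_unit_mono_diff[OF assms(1)] by auto
  have "bounded (\<psi> ` X)"
    unfolding bounded_iff using b by (auto intro!: exI[of _ 1])
  then show "bounded_variation_on X \<psi>" unfolding bounded_variation_on_def using tv
    by (auto simp: order_le_less_trans)
  have tv_real: "0 \<le> real_of_ereal (total_variation_on X \<psi>) \<and> real_of_ereal (total_variation_on X \<psi>) \<le> 2"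
    using tv by (cases "total_variation_on X \<psi>") auto
  have bdd: "bdd_above ((\<lambda>x. \<bar>\<psi> x\<bar>) ` X)" using b by (auto intro!: bdd_aboveI[of _ 1])
  have sup_le: "(SUP x\<in>X. \<bar>\<psi> x\<bar>) \<le> 1" using assms(2) b by (intro cSUP_least) auto
  obtain x0 where "x0 \<in> X" using assms(2) by auto
  have sup_ge: "0 \<le> (SUP x\<in>X. \<bar>\<psi> x\<bar>)"
    using cSUP_upper[OF \<open>x0 \<in> X\<close> bdd] by (meson abs_ge_zero order_trans)
  show "0 \<le> BV_norm X \<psi>" "BV_norm X \<psi> \<le> 3"
    unfolding BV_norm_def using tv_real sup_le sup_ge by auto
qed

section \<open>Measure preserving systems on a set of reals\<close>

locale real_mps =
  fixes X :: "real set" and M :: "real measure" and T :: "real \<Rightarrow> real"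
  assumes space_eq: "space M = X" and sets_eq: "sets M = sets (restrict_space borel X)"
    and prob: "prob_space M" and preserving: "measure_preserving_map M T"
begin

sublocale prob_space M by (rule prob)

lemma X_nonempty: "X \<noteq> {}" using not_empty space_eq by auto

lemma borel_measurable_restrict: "f \<in> borel_measurable borel \<Longrightarrow> f \<in> borel_measurable M"
  by (subst measurable_cong_sets[OF sets_eq refl]) (rule measurable_restrict_space1)

lemma measurable_ident [measurable]: "(\<lambda>x. x) \<in> borel_measurable M"
  by (rule borel_measurable_restrict) simp

lemma Int_X_sets: "A \<in> sets borel \<Longrightarrow> A \<inter> X \<in> sets M"
  using sets_eq by (auto simp: sets_restrict_space)

lemma measurable_T [measurable]: "T \<in> M \<rightarrow>\<^sub>M M"
  using preserving unfolding measure_preserving_map_def by auto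

lemma measurable_funpow_T [measurable]: "T ^^ n \<in> M \<rightarrow>\<^sub>M M"
  by (induct n) (auto intro: measurable_comp[OF _ measurable_T])

lemma borel_measurable_funpow_T [measurable]: "T ^^ n \<in> borel_measurable M"
  using measurable_compose[OF measurable_funpow_T measurable_ident] by simp

lemma distr_funpow_T: "distr M M (T ^^ n) = M"
proof (induct n)
  case 0 then show ?case by (simp add: distr_id2 sets_eq_imp_space_eq)
next
  case (Suc n)
  have "distr M M (T ^^ Suc n) = distr (distr M M (T ^^ n)) M T"
    by (simp add: distr_distr[OF measurable_T measurable_funpow_T])
  also have "\<dots> = M" using Suc preserving unfolding measure_preserving_map_def by simp
  finally show ?case .
qed

lemma integral_funpow_T:
  fixes f :: "real \<Rightarrow> real"
  assumes "f \<in> borel_measurable M"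
  shows "(\<integral>x. f ((T ^^ n) x) \<partial>M) = integral\<^sup>L M f"
  using integral_distr[of "T ^^ n" M M f] measurable_funpow_T assms distr_funpow_T by simp

lemma unit_mono_diff_measurable: "unit_mono_diff \<psi> \<Longrightarrow> \<psi> \<in> borel_measurable M"
  using borel_measurable_restrict borel_measurable_unit_mono_diff by blast

lemma integrable_unit_mono_diff:
  assumes "unit_mono_diff \<psi>"
  shows "integrable M \<psi>"
  by (rule integrable_const_bound[where B=1])
     (use unit_mono_diff_bounds[OF assms] in \<open>auto intro!: AE_I2 simp: unit_mono_diff_measurable[OF assms]\<close>)

lemma unit_mono_diff_ball_measure:
  assumes "r > 0"
  shows "unit_mono_diff (\<lambda>y. measure M (ball y r \<inter> X))"
proof -
  define F where "F y = measure M ({..<y+r} \<inter> X)" for y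
  define G where "G y = measure M ({..y-r} \<inter> X)" for y
  have "mono F" "mono G" unfolding F_def G_def mono_def
    by (auto intro!: finite_measure_mono Int_X_sets)
  moreover have "ball y r \<inter> X = ({..<y+r} \<inter> X) - ({..y-r} \<inter> X)" for y
    by (auto simp: dist_real_def abs_less_iff)
  then have "\<forall>y. measure M (ball y r \<inter> X) = F y - G y"
    unfolding F_def G_def using assms by (auto intro!: finite_measure_Diff Int_X_sets)
  moreover have "\<forall>x. 0 \<le> F x \<and> F x \<le> 1" "\<forall>x. 0 \<le> G x \<and> G x \<le> 1"
    unfolding F_def G_def by auto
  moreover have "\<forall>y. 0 \<le> measure M (ball y r \<inter> X) \<and> measure M (ball y r \<inter> X) \<le> 1" by auto
  ultimately show ?thesis unfolding unit_mono_diff_def by blast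
qed

lemma Linf_norm_le_1:
  assumes "\<phi> \<in> borel_measurable M" "\<And>x. \<bar>\<phi> x\<bar> \<le> 1"
  shows "in_Linf M \<phi>" "0 \<le> Linf_norm M \<phi>" "Linf_norm M \<phi> \<le> 1"
proof -
  have meas: "(\<lambda>x. ereal \<bar>\<phi> x\<bar>) \<in> borel_measurable M" using assms(1) by measurable
  have le: "esssup M (\<lambda>x. ereal \<bar>\<phi> x\<bar>) \<le> 1"
    by (rule esssup_I[OF meas]) (auto intro!: AE_I2 simp: assms(2))
  have "esssup M (\<lambda>x. ereal 0) \<le> esssup M (\<lambda>x. ereal \<bar>\<phi> x\<bar>)"
    by (rule esssup_mono) auto
  moreover have "esssup M (\<lambda>x. ereal 0) = 0"
    by (subst esssup_const) (auto simp: emeasure_space_1)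
  ultimately have ge: "0 \<le> esssup M (\<lambda>x. ereal \<bar>\<phi> x\<bar>)" by (simp add: zero_ereal_def)
  show "in_Linf M \<phi>" unfolding in_Linf_def using assms(1) le by (auto simp: order_le_less_trans)
  show "0 \<le> Linf_norm M \<phi>" "Linf_norm M \<phi> \<le> 1" unfolding Linf_norm_def using le ge
    by (cases "esssup M (\<lambda>x. ereal \<bar>\<phi> x\<bar>)"; auto)+
qed

text \<open>A set \<open>A\<close> of diameter less than \<open>r\<close> lies in \<open>B(y, r)\<close> for every \<open>y \<in> A\<close>, so
  \<open>\<mu>(A)^2 \<le> \<integral> \<mu>(B(y, r)) d\<mu>(y)\<close>; and \<open>B(b, r)\<close> is covered by two such half balls.\<close>
lemma ball_measure_le_sqrt:
  assumes "r > 0"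
  shows "measure M (ball b r \<inter> X) \<le> 2 * sqrt (\<integral>y. measure M (ball y r \<inter> X) \<partial>M)"
proof -
  define h where "h y = measure M (ball y r \<inter> X)" for y
  have small_diameter: "measure M (A \<inter> X) \<le> sqrt (integral\<^sup>L M h)"
    if A: "A \<in> sets borel" "\<And>y z. y \<in> A \<Longrightarrow> z \<in> A \<Longrightarrow> dist y z < r" for A
  proof -
    have AX: "A \<inter> X \<in> sets M" using Int_X_sets[OF A(1)] .
    have "(measure M (A \<inter> X))^2 = (\<integral>y. indicator (A \<inter> X) y * measure M (A \<inter> X) \<partial>M)"
      using AX space_eq by (simp add: power2_eq_square Int_absorb2 sets.sets_into_space)
    also have "\<dots> \<le> (\<integral>y. h y \<partial>M)"
    proof (rule integral_mono)
      show "integrable M (\<lambda>y. indicator (A \<inter> X) y * measure M (A \<inter> X))"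
        using AX by (intro integrable_mult_left integrable_const_bound[where B=1]) (auto intro!: AE_I2)
      show "integrable M h"
        unfolding h_def by (rule integrable_unit_mono_diff[OF unit_mono_diff_ball_measure[OF assms]])
      fix y assume "y \<in> space M"
      show "indicator (A \<inter> X) y * measure M (A \<inter> X) \<le> h y"
      proof (cases "y \<in> A \<inter> X")
        case True
        then have "A \<inter> X \<subseteq> ball y r \<inter> X" using A(2) by (auto simp: ball_def)
        then have "measure M (A \<inter> X) \<le> h y" unfolding h_def
          by (intro finite_measure_mono Int_X_sets) auto
        then show ?thesis using True by simp
      qed (simp add: h_def)
    qed
    finally show ?thesis by (rule real_le_rsqrt)
  qed
  have "ball b r \<inter> X \<subseteq> ({b - r<..b} \<inter> X) \<union> ({b<..<b + r} \<inter> X)"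
    by (auto simp: dist_real_def abs_less_iff)
  then have "measure M (ball b r \<inter> X) \<le> measure M (({b - r<..b} \<inter> X) \<union> ({b<..<b + r} \<inter> X))"
    by (intro finite_measure_mono) (auto intro!: Int_X_sets)
  also have "\<dots> \<le> measure M ({b - r<..b} \<inter> X) + measure M ({b<..<b + r} \<inter> X)"
    by (intro measure_subadditive) (auto intro!: Int_X_sets)
  also have "\<dots> \<le> sqrt (integral\<^sup>L M h) + sqrt (integral\<^sup>L M h)"
    by (intro add_mono small_diameter) (auto simp: dist_real_def)
  finally show ?thesis unfolding h_def by simp
qed

lemma mixing_unit_mono_diff_forward:
  assumes mix: "\<And>\<psi> \<phi> (n::nat). \<psi> \<in> borel_measurable M \<Longrightarrow> bounded_variation_on X \<psi> \<Longrightarrow>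
          in_Linf M \<phi> \<Longrightarrow>
          \<bar>(\<integral>x. \<psi> x * \<phi> ((T ^^ n) x) \<partial>M) - (\<integral>x. \<psi> x \<partial>M) * (\<integral>x. \<phi> x \<partial>M)\<bar>
            \<le> C * BV_norm X \<psi> * Linf_norm M \<phi> * exp (- \<theta> * real n)"
    and "C > 0" "\<theta> > 0" and \<psi>: "unit_mono_diff \<psi>" and \<phi>: "unit_mono_diff \<phi>" and gap: "i + g \<le> k"
  shows "\<bar>(\<integral>x. \<psi> ((T^^i) x) * \<phi> ((T^^k) x) \<partial>M) - integral\<^sup>L M \<psi> * integral\<^sup>L M \<phi>\<bar>
    \<le> 3 * C * exp (- \<theta> * real g)"
proof -
  define n where "n = k - i"
  have k: "k = n + i" using gap unfolding n_def by simp
  have [measurable]: "\<psi> \<in> borel_measurable M" "\<phi> \<in> borel_measurable M"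
    using \<psi> \<phi> unit_mono_diff_measurable by auto
  have "(\<integral>x. \<psi> ((T^^i) x) * \<phi> ((T^^k) x) \<partial>M) = (\<integral>x. (\<lambda>z. \<psi> z * \<phi> ((T^^n) z)) ((T^^i) x) \<partial>M)"
    unfolding k funpow_add by simp
  also have "\<dots> = (\<integral>z. \<psi> z * \<phi> ((T^^n) z) \<partial>M)"
    by (rule integral_funpow_T) measurable
  finally have shift: "(\<integral>x. \<psi> ((T^^i) x) * \<phi> ((T^^k) x) \<partial>M) = (\<integral>z. \<psi> z * \<phi> ((T^^n) z) \<partial>M)" .
  have bv: "bounded_variation_on X \<psi>" "0 \<le> BV_norm X \<psi>" "BV_norm X \<psi> \<le> 3"
    using BV_norm_unit_mono_diff[OF \<psi> X_nonempty] by auto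
  have li: "in_Linf M \<phi>" "0 \<le> Linf_norm M \<phi>" "Linf_norm M \<phi> \<le> 1"
    using Linf_norm_le_1[OF unit_mono_diff_measurable[OF \<phi>]] unit_mono_diff_bounds[OF \<phi>]
    by (auto simp: abs_le_iff)
  have "\<bar>(\<integral>z. \<psi> z * \<phi> ((T^^n) z) \<partial>M) - integral\<^sup>L M \<psi> * integral\<^sup>L M \<phi>\<bar>
      \<le> C * BV_norm X \<psi> * Linf_norm M \<phi> * exp (- \<theta> * real n)"
    using mix[OF _ bv(1) li(1)] by simp
  also have "\<dots> \<le> C * 3 * 1 * exp (- \<theta> * real g)"
    using assms(2,3) bv li gap unfolding n_def by (intro mult_mono) auto
  finally show ?thesis unfolding shift by simp
qed

lemma mixing_unit_mono_diff:
  assumes "exp_mixing_BV_Linf X M T"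
  obtains C \<theta> where "C > 0" "\<theta> > 0"
    "\<And>\<psi> \<phi> i k g. unit_mono_diff \<psi> \<Longrightarrow> unit_mono_diff \<phi> \<Longrightarrow> i + g \<le> k \<or> k + g \<le> i \<Longrightarrow>
       \<bar>(\<integral>x. \<psi> ((T^^i) x) * \<phi> ((T^^k) x) \<partial>M) - integral\<^sup>L M \<psi> * integral\<^sup>L M \<phi>\<bar>
         \<le> C * exp (- \<theta> * real g)"
proof -
  obtain C \<theta> where C: "C > 0" "\<theta> > 0" and mix: "\<And>\<psi> \<phi> (n::nat). \<psi> \<in> borel_measurable M \<Longrightarrow>
          bounded_variation_on X \<psi> \<Longrightarrow> in_Linf M \<phi> \<Longrightarrow>
          \<bar>(\<integral>x. \<psi> x * \<phi> ((T ^^ n) x) \<partial>M) - (\<integral>x. \<psi> x \<partial>M) * (\<integral>x. \<phi> x \<partial>M)\<bar>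
            \<le> C * BV_norm X \<psi> * Linf_norm M \<phi> * exp (- \<theta> * real n)"
    using assms unfolding exp_mixing_BV_Linf_def by blast
  have forward: "\<bar>(\<integral>x. \<psi> ((T^^i) x) * \<phi> ((T^^k) x) \<partial>M) - integral\<^sup>L M \<psi> * integral\<^sup>L M \<phi>\<bar>
      \<le> 3 * C * exp (- \<theta> * real g)"
    if "unit_mono_diff \<psi>" "unit_mono_diff \<phi>" "i + g \<le> k" for \<psi> \<phi> and i k g :: nat
    using mix C that by (rule mixing_unit_mono_diff_forward)
  show thesis
  proof (rule that[of "3 * C" \<theta>])
    fix \<psi> \<phi> and i k g :: nat assume units: "unit_mono_diff \<psi>" "unit_mono_diff \<phi>" and "i + g \<le> k \<or> k + g \<le> i"
    then show "\<bar>(\<integral>x. \<psi> ((T^^i) x) * \<phi> ((T^^k) x) \<partial>M) - integral\<^sup>L M \<psi> * integral\<^sup>L M \<phi>\<bar>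
        \<le> 3 * C * exp (- \<theta> * real g)"
      using forward[OF units] forward[OF units(2,1), of k g i] by (auto simp: mult.commute)
  qed (use C in auto)
qed

end

section \<open>The second moment bound\<close>

definition ball_integral :: "real set \<Rightarrow> real measure \<Rightarrow> real measure \<Rightarrow> real \<Rightarrow> real" where
  "ball_integral X M N \<rho> = (\<integral>y. measure M (ball y \<rho> \<inter> X) \<partial>N)"

locale mixing_pair = S1: real_mps X M1 T1 + S2: real_mps X M2 T2 for X M1 T1 M2 T2 +
  fixes C1 \<theta>1 C2 \<theta>2 :: real
  assumes C_pos: "C1 > 0" "C2 > 0" and \<theta>_pos: "\<theta>1 > 0" "\<theta>2 > 0"
  and mix1: "\<And>\<psi> \<phi> i k g. unit_mono_diff \<psi> \<Longrightarrow> unit_mono_diff \<phi> \<Longrightarrow> i + g \<le> k \<or> k + g \<le> i \<Longrightarrow>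
     \<bar>(\<integral>x. \<psi> ((T1^^i) x) * \<phi> ((T1^^k) x) \<partial>M1) - integral\<^sup>L M1 \<psi> * integral\<^sup>L M1 \<phi>\<bar>
       \<le> C1 * exp (- \<theta>1 * real g)"
  and mix2: "\<And>\<psi> \<phi> i k g. unit_mono_diff \<psi> \<Longrightarrow> unit_mono_diff \<phi> \<Longrightarrow> i + g \<le> k \<or> k + g \<le> i \<Longrightarrow>
     \<bar>(\<integral>x. \<psi> ((T2^^i) x) * \<phi> ((T2^^k) x) \<partial>M2) - integral\<^sup>L M2 \<psi> * integral\<^sup>L M2 \<phi>\<bar>
       \<le> C2 * exp (- \<theta>2 * real g)"
begin

sublocale P: pair_prob_space M1 M2 ..

lemma space_P: "space (M1 \<Otimes>\<^sub>M M2) = X \<times> X"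
  by (simp add: space_pair_measure S1.space_eq S2.space_eq)

lemma E_set_sets [measurable]: "E_set X T1 T2 m \<rho> \<in> sets (M1 \<Otimes>\<^sub>M M2)"
proof -
  have "E_set X T1 T2 m \<rho>
      = {z \<in> space (M1 \<Otimes>\<^sub>M M2). \<exists>i<m. \<exists>j<m. \<bar>(T1 ^^ i) (fst z) - (T2 ^^ j) (snd z)\<bar> < \<rho>}"
    by (force simp: E_set_def space_P)
  also have "\<dots> \<in> sets (M1 \<Otimes>\<^sub>M M2)" by measurable
  finally show ?thesis .
qed

end

lemma sum4_mult_sum2:
  fixes a b :: "nat \<Rightarrow> nat \<Rightarrow> real"
  shows "(\<Sum>i<m. \<Sum>j<m. \<Sum>k<m. \<Sum>l<m. a i k * b j l) = (\<Sum>i<m. \<Sum>k<m. a i k) * (\<Sum>j<m. \<Sum>l<m. b j l)"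
proof -
  have "(\<Sum>i<m. \<Sum>j<m. \<Sum>k<m. \<Sum>l<m. a i k * b j l) = (\<Sum>i<m. \<Sum>k<m. \<Sum>j<m. \<Sum>l<m. a i k * b j l)"
    by (intro sum.cong refl sum.swap)
  also have "\<dots> = (\<Sum>i<m. \<Sum>k<m. a i k * (\<Sum>j<m. \<Sum>l<m. b j l))"
    by (simp add: sum_distrib_left)
  also have "\<dots> = (\<Sum>i<m. \<Sum>k<m. a i k) * (\<Sum>j<m. \<Sum>l<m. b j l)"
    by (simp add: sum_distrib_right)
  finally show ?thesis .
qed

lemma one_close_coordinate_sum_le:
  fixes c g m s I E :: real
  assumes "c \<le> 2 * g * m" "c \<le> m * m" "0 \<le> s" "0 \<le> I" "0 \<le> E"
  shows "c * (2 * s * I + E) * (m * m) \<le> 4 * g * m ^ 3 * s * I + m ^ 4 * E"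
proof -
  have "c * (2 * s * I) \<le> (2 * g * m) * (2 * s * I)" "c * E \<le> (m * m) * E"
    using assms by (intro mult_right_mono; simp)+
  then have "c * (2 * s * I + E) \<le> (2 * g * m) * (2 * s * I) + (m * m) * E"
    unfolding distrib_left by (rule add_mono)
  then have "c * (2 * s * I + E) * (m * m) \<le> ((2 * g * m) * (2 * s * I) + (m * m) * E) * (m * m)"
    by (rule mult_right_mono) simp
  then show ?thesis by (simp add: power3_eq_cube power4_eq_xxxx algebra_simps)
qed

locale mixing_pair_radius = mixing_pair +
  fixes \<rho> :: real
  assumes \<rho>_pos: "\<rho> > 0"
begin

definition near :: "real \<Rightarrow> real \<Rightarrow> real" where "near u v = (if dist u v < \<rho> then 1 else 0)"

lemma near_eq_indicator: "near u = indicator (ball u \<rho>)" by (auto simp: near_def indicator_def)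
lemma near_commute: "near u v = near v u" by (simp add: near_def dist_commute)
lemma near_bounds: "0 \<le> near u v" "near u v \<le> 1" by (auto simp: near_def)

lemma borel_measurable_near [measurable]:
  assumes [measurable]: "a \<in> borel_measurable N" "b \<in> borel_measurable N"
  shows "(\<lambda>z. near (a z) (b z)) \<in> borel_measurable N"
  unfolding near_def by measurable

definition h1 :: "real \<Rightarrow> real" where "h1 y = measure M1 (ball y \<rho> \<inter> X)"
definition h2 :: "real \<Rightarrow> real" where "h2 x = measure M2 (ball x \<rho> \<inter> X)"
definition I :: real where "I = (\<integral>y. h1 y \<partial>M2)"
definition J1 :: real where "J1 = (\<integral>y. h1 y \<partial>M1)"
definition J2 :: real where "J2 = (\<integral>y. h2 y \<partial>M2)"

lemma unit_mono_diff_h1: "unit_mono_diff h1"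
  unfolding h1_def using S1.unit_mono_diff_ball_measure[OF \<rho>_pos] .
lemma unit_mono_diff_h2: "unit_mono_diff h2"
  unfolding h2_def using S2.unit_mono_diff_ball_measure[OF \<rho>_pos] .
lemma unit_mono_diff_near: "unit_mono_diff (near u)"
  unfolding near_eq_indicator using unit_mono_diff_indicator_ball[OF \<rho>_pos] .

lemma h1_measurable [measurable]: "h1 \<in> borel_measurable borel"
  using borel_measurable_unit_mono_diff[OF unit_mono_diff_h1] .
lemma h2_measurable [measurable]: "h2 \<in> borel_measurable borel"
  using borel_measurable_unit_mono_diff[OF unit_mono_diff_h2] .

lemma h1_bounds: "0 \<le> h1 y" "h1 y \<le> 1" using unit_mono_diff_bounds[OF unit_mono_diff_h1] by auto
lemma h2_bounds: "0 \<le> h2 y" "h2 y \<le> 1" using unit_mono_diff_bounds[OF unit_mono_diff_h2] by auto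

lemma h1_le_sqrt_J1: "h1 y \<le> 2 * sqrt J1"
  unfolding J1_def h1_def using S1.ball_measure_le_sqrt[OF \<rho>_pos] by (simp add: h1_def)
lemma h2_le_sqrt_J2: "h2 y \<le> 2 * sqrt J2"
  unfolding J2_def h2_def using S2.ball_measure_le_sqrt[OF \<rho>_pos] by (simp add: h2_def)

lemma integral_near1: "(\<integral>x. near x c \<partial>M1) = h1 c"
proof -
  have "\<And>x. near x c = indicator (ball c \<rho>) x" by (simp add: near_def indicator_def dist_commute)
  then have "(\<integral>x. near x c \<partial>M1) = (\<integral>x. indicator (ball c \<rho>) x \<partial>M1)" by (simp only:)
  then show ?thesis unfolding h1_def by (simp add: S1.space_eq Int_commute)
qed

lemma integral_near2: "(\<integral>y. near c y \<partial>M2) = h2 c"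
  unfolding near_eq_indicator h2_def by (simp add: S2.space_eq Int_commute)

lemma integrable_bounded_P:
  fixes G :: "real \<times> real \<Rightarrow> real"
  assumes "G \<in> borel_measurable (M1 \<Otimes>\<^sub>M M2)" "\<And>z. \<bar>G z\<bar> \<le> B"
  shows "integrable (M1 \<Otimes>\<^sub>M M2) G"
  by (rule P.integrable_const_bound[where B=B]) (use assms in auto)

lemma integrable_bounded1:
  fixes G :: "real \<Rightarrow> real"
  assumes "G \<in> borel_measurable M1" "\<And>z. \<bar>G z\<bar> \<le> B"
  shows "integrable M1 G"
  by (rule S1.integrable_const_bound[where B=B]) (use assms in auto)

lemma integrable_bounded2:
  fixes G :: "real \<Rightarrow> real"
  assumes "G \<in> borel_measurable M2" "\<And>z. \<bar>G z\<bar> \<le> B"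
  shows "integrable M2 G"
  by (rule S2.integrable_const_bound[where B=B]) (use assms in auto)

definition hit :: "nat \<Rightarrow> nat \<Rightarrow> real \<times> real \<Rightarrow> real" where
  "hit i j z = near ((T1^^i) (fst z)) ((T2^^j) (snd z))"

lemma hit_measurable [measurable]: "hit i j \<in> borel_measurable (M1 \<Otimes>\<^sub>M M2)"
  unfolding hit_def by measurable

lemma hit_bounds: "0 \<le> hit i j z" "hit i j z \<le> 1" unfolding hit_def using near_bounds by auto

lemma integrable_hit [simp]: "integrable (M1 \<Otimes>\<^sub>M M2) (hit i j)"
  by (rule integrable_bounded_P[where B=1]) (auto simp: hit_def near_def)

lemma integrable_hit_mult [simp]: "integrable (M1 \<Otimes>\<^sub>M M2) (\<lambda>z. hit i j z * hit k l z)"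
  by (rule integrable_bounded_P[where B=1]) (auto simp: hit_def near_def)

lemma I_eq_integral_h2: "I = (\<integral>x. h2 x \<partial>M1)"
proof -
  have int: "integrable (M1 \<Otimes>\<^sub>M M2) (\<lambda>(x,y). near x y)"
    by (rule integrable_bounded_P[where B=1]) (auto simp: near_def)
  have "I = (\<integral>y. (\<integral>x. near x y \<partial>M1) \<partial>M2)" unfolding I_def integral_near1 ..
  also have "\<dots> = (\<integral>x. (\<integral>y. near x y \<partial>M2) \<partial>M1)" using P.Fubini_integral[OF int] .
  also have "\<dots> = (\<integral>x. h2 x \<partial>M1)" unfolding integral_near2 ..
  finally show ?thesis .
qed

lemma integral_h1_funpow: "(\<integral>y. h1 ((T2^^j) y) \<partial>M2) = I"
  unfolding I_def by (rule S2.integral_funpow_T) (rule S2.borel_measurable_restrict, measurable)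

lemma integral_h2_funpow: "(\<integral>x. h2 ((T1^^i) x) \<partial>M1) = I"
  unfolding I_eq_integral_h2 by (rule S1.integral_funpow_T) (rule S1.borel_measurable_restrict, measurable)

lemma integral_hit: "(\<integral>z. hit i j z \<partial>(M1 \<Otimes>\<^sub>M M2)) = I"
proof -
  have int: "integrable (M1 \<Otimes>\<^sub>M M2) (\<lambda>(x,y). near ((T1^^i) x) ((T2^^j) y))"
    by (rule integrable_bounded_P[where B=1]) (auto simp: near_def)
  have "(\<integral>z. hit i j z \<partial>(M1 \<Otimes>\<^sub>M M2))
      = (\<integral>z. (\<lambda>(x,y). near ((T1^^i) x) ((T2^^j) y)) z \<partial>(M1 \<Otimes>\<^sub>M M2))"
    unfolding hit_def by (simp add: case_prod_beta)
  also have "\<dots> = (\<integral>y. (\<integral>x. near ((T1^^i) x) ((T2^^j) y) \<partial>M1) \<partial>M2)"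
    using P.integral_snd[OF int] by simp
  also have "\<dots> = (\<integral>y. h1 ((T2^^j) y) \<partial>M2)"
  proof (rule Bochner_Integration.integral_cong[OF refl])
    fix y
    have "(\<integral>x. near ((T1^^i) x) ((T2^^j) y) \<partial>M1) = (\<integral>x. near x ((T2^^j) y) \<partial>M1)"
      by (rule S1.integral_funpow_T) measurable
    then show "(\<integral>x. near ((T1^^i) x) ((T2^^j) y) \<partial>M1) = h1 ((T2^^j) y)"
      using integral_near1 by simp
  qed
  also have "\<dots> = I" by (rule integral_h1_funpow)
  finally show ?thesis .
qed

definition hit_corr :: "nat \<Rightarrow> nat \<Rightarrow> nat \<Rightarrow> nat \<Rightarrow> real" where
  "hit_corr i j k l = (\<integral>z. hit i j z * hit k l z \<partial>(M1 \<Otimes>\<^sub>M M2))"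

definition mix_err1 :: "nat \<Rightarrow> real" where "mix_err1 g = C1 * exp (- \<theta>1 * real g)"
definition mix_err2 :: "nat \<Rightarrow> real" where "mix_err2 g = C2 * exp (- \<theta>2 * real g)"

lemma mix_err_nonneg: "0 \<le> mix_err1 g" "0 \<le> mix_err2 g"
  unfolding mix_err1_def mix_err2_def using C_pos by auto

lemma I_nonneg: "0 \<le> I" unfolding I_def using h1_bounds by simp
lemma J_nonneg: "0 \<le> J1" "0 \<le> J2" unfolding J1_def J2_def using h1_bounds h2_bounds by simp_all

lemma integrable_hit_corr_integrand:
  "integrable (M1 \<Otimes>\<^sub>M M2) (\<lambda>(x,y). near ((T1^^i) x) ((T2^^j) y) * near ((T1^^k) x) ((T2^^l) y))"
  by (rule integrable_bounded_P[where B=1]) (auto simp: near_def)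

lemma hit_corr_iterated_y:
  "hit_corr i j k l = (\<integral>y. (\<integral>x. near ((T1^^i) x) ((T2^^j) y) * near ((T1^^k) x) ((T2^^l) y) \<partial>M1) \<partial>M2)"
  unfolding hit_corr_def hit_def using P.integral_snd[OF integrable_hit_corr_integrand]
  unfolding case_prod_beta' by simp

lemma hit_corr_iterated_x:
  "hit_corr i j k l = (\<integral>x. (\<integral>y. near ((T1^^i) x) ((T2^^j) y) * near ((T1^^k) x) ((T2^^l) y) \<partial>M2) \<partial>M1)"
  unfolding hit_corr_def hit_def using P.integral_fst[OF integrable_hit_corr_integrand]
  unfolding case_prod_beta' by simp

lemma hit_corr_le_I: "hit_corr i j k l \<le> I"
proof -
  have "hit_corr i j k l \<le> (\<integral>z. hit i j z \<partial>(M1 \<Otimes>\<^sub>M M2))"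
    unfolding hit_corr_def
    by (rule integral_mono) (use hit_bounds in \<open>auto simp: mult_left_le\<close>)
  then show ?thesis using integral_hit by simp
qed

lemma hit_corr_le_far1:
  assumes "i + g \<le> k \<or> k + g \<le> i"
  shows "hit_corr i j k l \<le> (\<integral>y. h1 ((T2^^j) y) * h1 ((T2^^l) y) \<partial>M2) + mix_err1 g"
proof -
  have inner: "(\<integral>x. near ((T1^^i) x) a * near ((T1^^k) x) b \<partial>M1) \<le> h1 a * h1 b + mix_err1 g" for a b
  proof -
    have "integral\<^sup>L M1 (near c) = h1 c" for c
    proof -
      have "near c = (\<lambda>x. near x c)" by (rule ext) (simp add: near_commute)
      then show ?thesis using integral_near1[of c] by simp
    qed
    then have "\<bar>(\<integral>x. near a ((T1^^i) x) * near b ((T1^^k) x) \<partial>M1) - h1 a * h1 b\<bar> \<le> mix_err1 g"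
      using mix1[OF unit_mono_diff_near unit_mono_diff_near assms, of a b] unfolding mix_err1_def
      by simp
    then show ?thesis by (simp add: near_commute abs_le_iff)
  qed
  have "hit_corr i j k l \<le> (\<integral>y. h1 ((T2^^j) y) * h1 ((T2^^l) y) + mix_err1 g \<partial>M2)"
    unfolding hit_corr_iterated_y
  proof (rule integral_mono[OF _ _ inner])
    show "integrable M2 (\<lambda>y. \<integral>x. near ((T1 ^^ i) x) ((T2 ^^ j) y) * near ((T1 ^^ k) x) ((T2 ^^ l) y) \<partial>M1)"
      using P.integrable_snd[OF integrable_hit_corr_integrand] by simp
    show "integrable M2 (\<lambda>y. h1 ((T2 ^^ j) y) * h1 ((T2 ^^ l) y) + mix_err1 g)"
      by (rule integrable_bounded2[where B="1 + mix_err1 g"], measurable)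
         (use h1_bounds mix_err_nonneg in \<open>auto simp: abs_le_iff mult_le_one\<close>)
  qed
  also have "\<dots> = (\<integral>y. h1 ((T2^^j) y) * h1 ((T2^^l) y) \<partial>M2) + mix_err1 g"
  proof -
    have "integrable M2 (\<lambda>y. h1 ((T2^^j) y) * h1 ((T2^^l) y))"
      by (rule integrable_bounded2[where B=1], measurable, auto simp: abs_le_iff mult_le_one h1_bounds)
    then show ?thesis by (subst Bochner_Integration.integral_add) (auto simp: S2.prob_space)
  qed
  finally show ?thesis .
qed

lemma hit_corr_le_far2:
  assumes "j + g \<le> l \<or> l + g \<le> j"
  shows "hit_corr i j k l \<le> (\<integral>x. h2 ((T1^^i) x) * h2 ((T1^^k) x) \<partial>M1) + mix_err2 g"
proof -
  have inner: "(\<integral>y. near a ((T2^^j) y) * near b ((T2^^l) y) \<partial>M2) \<le> h2 a * h2 b + mix_err2 g" for a b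
  proof -
    have "\<bar>(\<integral>y. near a ((T2^^j) y) * near b ((T2^^l) y) \<partial>M2) - h2 a * h2 b\<bar> \<le> mix_err2 g"
      using mix2[OF unit_mono_diff_near unit_mono_diff_near assms, of a b]
      unfolding mix_err2_def integral_near2 .
    then show ?thesis by (simp add: abs_le_iff)
  qed
  have "hit_corr i j k l \<le> (\<integral>x. h2 ((T1^^i) x) * h2 ((T1^^k) x) + mix_err2 g \<partial>M1)"
    unfolding hit_corr_iterated_x
  proof (rule integral_mono[OF _ _ inner])
    show "integrable M1 (\<lambda>x. \<integral>y. near ((T1 ^^ i) x) ((T2 ^^ j) y) * near ((T1 ^^ k) x) ((T2 ^^ l) y) \<partial>M2)"
      using P.integrable_fst[OF integrable_hit_corr_integrand] by simp
    show "integrable M1 (\<lambda>x. h2 ((T1 ^^ i) x) * h2 ((T1 ^^ k) x) + mix_err2 g)"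
      by (rule integrable_bounded1[where B="1 + mix_err2 g"], measurable)
         (use h2_bounds mix_err_nonneg in \<open>auto simp: abs_le_iff mult_le_one\<close>)
  qed
  also have "\<dots> = (\<integral>x. h2 ((T1^^i) x) * h2 ((T1^^k) x) \<partial>M1) + mix_err2 g"
  proof -
    have "integrable M1 (\<lambda>x. h2 ((T1^^i) x) * h2 ((T1^^k) x))"
      by (rule integrable_bounded1[where B=1], measurable, auto simp: abs_le_iff mult_le_one h2_bounds)
    then show ?thesis by (subst Bochner_Integration.integral_add) (auto simp: S1.prob_space)
  qed
  finally show ?thesis .
qed

lemma integral_h1_funpow_mult_le: "(\<integral>y. h1 ((T2^^j) y) * h1 ((T2^^l) y) \<partial>M2) \<le> 2 * sqrt J1 * I"
proof -
  have "(\<integral>y. h1 ((T2^^j) y) * h1 ((T2^^l) y) \<partial>M2) \<le> (\<integral>y. h1 ((T2^^j) y) * (2 * sqrt J1) \<partial>M2)"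
  proof (rule integral_mono)
    show "integrable M2 (\<lambda>y. h1 ((T2^^j) y) * h1 ((T2^^l) y))"
      by (rule integrable_bounded2[where B=1], measurable, auto simp: abs_le_iff mult_le_one h1_bounds)
    show "integrable M2 (\<lambda>y. h1 ((T2^^j) y) * (2 * sqrt J1))"
      by (rule integrable_bounded2[where B="2 * sqrt J1"], measurable)
         (use h1_bounds J_nonneg in \<open>auto simp: abs_mult mult_left_le_one_le\<close>)
  qed (rule mult_left_mono[OF h1_le_sqrt_J1 h1_bounds(1)])
  also have "\<dots> = 2 * sqrt J1 * I" using integral_h1_funpow[of j] by simp
  finally show ?thesis .
qed

lemma integral_h2_funpow_mult_le: "(\<integral>x. h2 ((T1^^i) x) * h2 ((T1^^k) x) \<partial>M1) \<le> 2 * sqrt J2 * I"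
proof -
  have "(\<integral>x. h2 ((T1^^i) x) * h2 ((T1^^k) x) \<partial>M1) \<le> (\<integral>x. h2 ((T1^^i) x) * (2 * sqrt J2) \<partial>M1)"
  proof (rule integral_mono)
    show "integrable M1 (\<lambda>x. h2 ((T1^^i) x) * h2 ((T1^^k) x))"
      by (rule integrable_bounded1[where B=1], measurable, auto simp: abs_le_iff mult_le_one h2_bounds)
    show "integrable M1 (\<lambda>x. h2 ((T1^^i) x) * (2 * sqrt J2))"
      by (rule integrable_bounded1[where B="2 * sqrt J2"], measurable)
         (use h2_bounds J_nonneg in \<open>auto simp: abs_mult mult_left_le_one_le\<close>)
  qed (rule mult_left_mono[OF h2_le_sqrt_J2 h2_bounds(1)])
  also have "\<dots> = 2 * sqrt J2 * I" using integral_h2_funpow[of i] by simp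
  finally show ?thesis .
qed

lemma integral_h1_funpow_mult_far:
  assumes "j + g \<le> l \<or> l + g \<le> j"
  shows "(\<integral>y. h1 ((T2^^j) y) * h1 ((T2^^l) y) \<partial>M2) \<le> I * I + mix_err2 g"
  using mix2[OF unit_mono_diff_h1 unit_mono_diff_h1 assms] unfolding mix_err2_def I_def
  by (simp add: abs_le_iff)

definition close :: "nat \<Rightarrow> nat \<Rightarrow> nat \<Rightarrow> real" where
  "close g i k = (if i < k + g \<and> k < i + g then 1 else 0)"

definition hit_corr_excess :: "nat \<Rightarrow> nat \<Rightarrow> nat \<Rightarrow> nat \<Rightarrow> nat \<Rightarrow> real" where
  "hit_corr_excess g i j k l = close g i k * close g j l * I + close g i k * (2 * sqrt J2 * I + mix_err2 g)
     + close g j l * (2 * sqrt J1 * I + mix_err1 g) + (mix_err1 g + mix_err2 g)"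

lemma hit_corr_excess_commute: "hit_corr_excess g k l i j = hit_corr_excess g i j k l"
  unfolding hit_corr_excess_def close_def by (auto simp: algebra_simps)

lemma hit_corr_le: "hit_corr i j k l \<le> I * I + hit_corr_excess g i j k l"
proof -
  have nonneg: "0 \<le> 2 * sqrt J2 * I + mix_err2 g" "0 \<le> 2 * sqrt J1 * I + mix_err1 g"
    "0 \<le> mix_err1 g + mix_err2 g" "0 \<le> I * I"
    using I_nonneg J_nonneg mix_err_nonneg by auto
  have "close g i k = 1 \<or> i + g \<le> k \<or> k + g \<le> i" "close g j l = 1 \<or> j + g \<le> l \<or> l + g \<le> j"
    unfolding close_def by auto
  then consider "close g i k = 1" "close g j l = 1" | "close g i k = 1" "j + g \<le> l \<or> l + g \<le> j"
    | "i + g \<le> k \<or> k + g \<le> i" "close g j l = 1" | "i + g \<le> k \<or> k + g \<le> i" "j + g \<le> l \<or> l + g \<le> j"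
    by blast
  then show ?thesis
  proof cases
    case 1
    then have "hit_corr_excess g i j k l
        = I + (2 * sqrt J2 * I + mix_err2 g) + (2 * sqrt J1 * I + mix_err1 g) + (mix_err1 g + mix_err2 g)"
      unfolding hit_corr_excess_def by simp
    then show ?thesis using hit_corr_le_I[of i j k l] nonneg by linarith
  next
    case 2
    then have "hit_corr_excess g i j k l = (2 * sqrt J2 * I + mix_err2 g) + (mix_err1 g + mix_err2 g)"
      unfolding hit_corr_excess_def close_def by auto
    then show ?thesis
      using hit_corr_le_far2[OF 2(2), of i k] integral_h2_funpow_mult_le[of i k] nonneg by linarith
  next
    case 3
    then have "hit_corr_excess g i j k l = (2 * sqrt J1 * I + mix_err1 g) + (mix_err1 g + mix_err2 g)"
      unfolding hit_corr_excess_def close_def by auto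
    then show ?thesis
      using hit_corr_le_far1[OF 3(1), of j l] integral_h1_funpow_mult_le[of j l] nonneg by linarith
  next
    case 4
    then have "hit_corr_excess g i j k l = mix_err1 g + mix_err2 g"
      unfolding hit_corr_excess_def close_def by auto
    then show ?thesis
      using hit_corr_le_far1[OF 4(1), of j l] integral_h1_funpow_mult_far[OF 4(2)] nonneg by linarith
  qed
qed

lemma sum_close_le: "(\<Sum>i<m. \<Sum>k<m. close g i k) \<le> 2 * real g * real m"
proof -
  have row: "(\<Sum>k<m. close g i k) \<le> 2 * real g" for i
  proof -
    have "(\<Sum>k<m. close g i k) \<le> (\<Sum>k\<in>{..<m} \<union> {i-g..<i+g}. close g i k)"
      by (rule sum_mono2) (auto simp: close_def)
    also have "\<dots> = (\<Sum>k\<in>{i-g..<i+g}. close g i k)"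
      by (rule sum.mono_neutral_right) (auto simp: close_def)
    also have "\<dots> \<le> (\<Sum>k\<in>{i-g..<i+g}. 1)"
      by (rule sum_mono) (auto simp: close_def)
    finally show ?thesis by simp
  qed
  have "(\<Sum>i<m. \<Sum>k<m. close g i k) \<le> (\<Sum>i<m. 2 * real g)" by (rule sum_mono) (rule row)
  then show ?thesis by (simp add: mult.commute)
qed

lemma sum_close_le_square: "(\<Sum>i<m. \<Sum>k<m. close g i k) \<le> real m * real m"
proof -
  have "(\<Sum>i<m. \<Sum>k<m. close g i k) \<le> (\<Sum>i<m. \<Sum>k<m. 1)" by (intro sum_mono) (auto simp: close_def)
  then show ?thesis by simp
qed

lemma sum_hit_corr_excess_le: "(\<Sum>i<m. \<Sum>j<m. \<Sum>k<m. \<Sum>l<m. hit_corr_excess g i j k l)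
   \<le> 4 * real g ^ 2 * real m ^ 2 * I + 4 * real g * real m ^ 3 * (sqrt J1 + sqrt J2) * I
     + 2 * real m ^ 4 * (mix_err1 g + mix_err2 g)"
proof -
  define c where "c = (\<Sum>i<m. \<Sum>k<m. close g i k)"
  define \<beta>1 where "\<beta>1 = 2 * sqrt J1 * I + mix_err1 g"
  define \<beta>2 where "\<beta>2 = 2 * sqrt J2 * I + mix_err2 g"
  define \<gamma> where "\<gamma> = mix_err1 g + mix_err2 g"
  have "hit_corr_excess g i j k l
      = (close g i k * I) * close g j l + (close g i k * \<beta>2) * 1 + \<beta>1 * close g j l + \<gamma> * 1" for i j k l
    unfolding hit_corr_excess_def \<beta>1_def \<beta>2_def \<gamma>_def by (simp add: algebra_simps)
  then have "(\<Sum>i<m. \<Sum>j<m. \<Sum>k<m. \<Sum>l<m. hit_corr_excess g i j k l)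
      = (c * I) * c + (c * \<beta>2) * (real m * real m) + (\<beta>1 * (real m * real m)) * c
      + (\<gamma> * (real m * real m)) * (real m * real m)"
    by (simp add: sum.distrib sum4_mult_sum2 c_def sum_distrib_left sum_distrib_right mult_ac)
  also have "\<dots> \<le> 4 * real g ^ 2 * real m ^ 2 * I
      + (4 * real g * real m ^ 3 * sqrt J2 * I + real m ^ 4 * mix_err2 g)
      + (4 * real g * real m ^ 3 * sqrt J1 * I + real m ^ 4 * mix_err1 g)
      + real m ^ 4 * (mix_err1 g + mix_err2 g)"
  proof (intro add_mono)
    have c: "0 \<le> c" "c \<le> 2 * real g * real m" "c \<le> real m * real m"
      unfolding c_def using sum_close_le sum_close_le_square by (auto intro!: sum_nonneg simp: close_def)
    have "c * c * I \<le> (2 * real g * real m) * (2 * real g * real m) * I"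
      using c I_nonneg by (intro mult_right_mono mult_mono) auto
    then show "(c * I) * c \<le> 4 * real g ^ 2 * real m ^ 2 * I"
      by (simp add: power2_eq_square algebra_simps)
    show "(c * \<beta>2) * (real m * real m) \<le> 4 * real g * real m ^ 3 * sqrt J2 * I + real m ^ 4 * mix_err2 g"
      unfolding \<beta>2_def using c I_nonneg J_nonneg mix_err_nonneg
      by (intro one_close_coordinate_sum_le) auto
    show "(\<beta>1 * (real m * real m)) * c \<le> 4 * real g * real m ^ 3 * sqrt J1 * I + real m ^ 4 * mix_err1 g"
      using one_close_coordinate_sum_le[of c g m "sqrt J1" I "mix_err1 g"] c I_nonneg J_nonneg mix_err_nonneg
      unfolding \<beta>1_def by (simp add: mult_ac)
  qed (simp add: \<gamma>_def power4_eq_xxxx mult_ac)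
  finally show ?thesis by (simp add: algebra_simps)
qed

definition hits :: "nat \<Rightarrow> real \<times> real \<Rightarrow> real" where "hits m z = (\<Sum>i<m. \<Sum>j<m. hit i j z)"

lemma hits_measurable [measurable]: "hits m \<in> borel_measurable (M1 \<Otimes>\<^sub>M M2)"
  unfolding hits_def by measurable

lemma integrable_hits [simp]: "integrable (M1 \<Otimes>\<^sub>M M2) (hits m)"
  unfolding hits_def by simp

lemma integrable_hits_square: "integrable (M1 \<Otimes>\<^sub>M M2) (\<lambda>z. hits m z * hits m z)"
  by (simp add: hits_def sum_distrib_left sum_distrib_right)

lemma integral_hits: "(\<integral>z. hits m z \<partial>(M1 \<Otimes>\<^sub>M M2)) = real m * real m * I"
  unfolding hits_def by (simp add: integral_hit)

lemma integral_hits_square: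
  "(\<integral>z. hits m z * hits m z \<partial>(M1 \<Otimes>\<^sub>M M2)) = (\<Sum>i<m. \<Sum>j<m. \<Sum>k<m. \<Sum>l<m. hit_corr k l i j)"
proof -
  have "(\<lambda>z. hits m z * hits m z) = (\<lambda>z. \<Sum>i<m. \<Sum>j<m. \<Sum>k<m. \<Sum>l<m. hit k l z * hit i j z)"
    unfolding hits_def by (simp add: sum_distrib_left sum_distrib_right)
  then show ?thesis by (simp add: hit_corr_def)
qed

lemma miss_eq_hits_zero:
  "space (M1 \<Otimes>\<^sub>M M2) - E_set X T1 T2 m \<rho> = {z \<in> space (M1 \<Otimes>\<^sub>M M2). hits m z = 0}"
proof -
  have "hits m z = 0 \<longleftrightarrow> (\<forall>i<m. \<forall>j<m. hit i j z = 0)" for z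
    unfolding hits_def using hit_bounds by (auto simp: sum_nonneg_eq_0_iff sum_nonneg)
  moreover have "hit i j z = 0 \<longleftrightarrow> \<not> \<bar>(T1^^i) (fst z) - (T2^^j) (snd z)\<bar> < \<rho>" for i j z
    unfolding hit_def near_def by (simp add: dist_real_def)
  ultimately show ?thesis unfolding space_P E_set_def by (auto; blast)
qed

lemma measure_miss_le:
  assumes "m > 0" "I > 0"
  shows "measure (M1 \<Otimes>\<^sub>M M2) (space (M1 \<Otimes>\<^sub>M M2) - E_set X T1 T2 m \<rho>)
     \<le> 4 * real g ^ 2 / (real m ^ 2 * I) + 4 * real g * (sqrt J1 + sqrt J2) / (real m * I)
       + 2 * (mix_err1 g + mix_err2 g) / I ^ 2"
proof -
  let ?P = "M1 \<Otimes>\<^sub>M M2"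
  define B where "B = space ?P - E_set X T1 T2 m \<rho>"
  define e where "e = real m * real m * I"
  have B: "B \<in> sets ?P" unfolding B_def by measurable
  have "measure ?P B * e^2 = (\<integral>z. indicator B z * e^2 \<partial>?P)"
    using B by simp
  also have "\<dots> \<le> (\<integral>z. (hits m z - e)^2 \<partial>?P)"
  proof (rule integral_mono)
    show "integrable ?P (\<lambda>z. indicator B z * e\<^sup>2)"
      using B by (intro integrable_mult_left integrable_bounded_P[where B=1]) auto
    show "integrable ?P (\<lambda>z. (hits m z - e)\<^sup>2)"
      using integrable_hits_square[of m] by (simp add: power2_eq_square algebra_simps)
    show "indicator B z * e^2 \<le> (hits m z - e)^2" for z
      by (cases "z \<in> B") (auto simp: B_def miss_eq_hits_zero)
  qed
  also have "(\<integral>z. (hits m z - e)^2 \<partial>?P) = (\<integral>z. hits m z * hits m z \<partial>?P) - e^2"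
  proof -
    have "(\<lambda>z. (hits m z - e)^2) = (\<lambda>z. hits m z * hits m z + (- 2 * e) * hits m z + e^2)"
      by (rule ext) (simp add: power2_eq_square algebra_simps)
    then have "(\<integral>z. (hits m z - e)^2 \<partial>?P)
        = (\<integral>z. hits m z * hits m z \<partial>?P) + (- 2 * e) * (\<integral>z. hits m z \<partial>?P) + e^2"
      using integrable_hits_square[of m] by (simp add: P.prob_space)
    then show ?thesis unfolding integral_hits e_def by (simp add: power2_eq_square)
  qed
  also have "(\<integral>z. hits m z * hits m z \<partial>?P) \<le> (\<Sum>i<m. \<Sum>j<m. \<Sum>k<m. \<Sum>l<m. I * I + hit_corr_excess g k l i j)"
    unfolding integral_hits_square by (intro sum_mono hit_corr_le)
  also have "\<dots> = e^2 + (\<Sum>i<m. \<Sum>j<m. \<Sum>k<m. \<Sum>l<m. hit_corr_excess g i j k l)"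
    by (simp add: sum.distrib e_def power2_eq_square algebra_simps hit_corr_excess_commute)
  finally have "measure ?P B * e^2 \<le> (\<Sum>i<m. \<Sum>j<m. \<Sum>k<m. \<Sum>l<m. hit_corr_excess g i j k l)" by simp
  also note sum_hit_corr_excess_le[where m=m and g=g]
  also have "4 * real g ^ 2 * real m ^ 2 * I + 4 * real g * real m ^ 3 * (sqrt J1 + sqrt J2) * I
     + 2 * real m ^ 4 * (mix_err1 g + mix_err2 g)
     = (4 * real g ^ 2 / (real m ^ 2 * I) + 4 * real g * (sqrt J1 + sqrt J2) / (real m * I)
       + 2 * (mix_err1 g + mix_err2 g) / I ^ 2) * e^2"
    using assms unfolding e_def by (simp add: field_simps power2_eq_square power3_eq_cube power4_eq_xxxx)
  finally show ?thesis
    using assms unfolding B_def[symmetric] e_def by (simp add: mult_le_cancel_right)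
qed

end

section \<open>Numerical estimates along dyadic blocks\<close>

text \<open>Terms of the Bertrand series \<open>\<Sum> 1 / (n (log n)^{1+\<epsilon>})\<close>, set to \<open>1\<close> for \<open>n < 3\<close> so that
  the sequence is positive and antitone.\<close>
definition bertrand :: "real \<Rightarrow> nat \<Rightarrow> real" where
  "bertrand \<epsilon> n = (if n < 3 then 1 else 1 / (real n * ln (real n) powr (1 + \<epsilon>)))"

lemma ln_3_gt_1: "1 < ln (3::real)"
proof -
  have "ln (272/100) < ln (3::real)" by (subst ln_less_cancel_iff) auto
  then show ?thesis using ln_272_gt_1 by linarith
qed

lemma bertrand_nonneg: "\<epsilon> > 0 \<Longrightarrow> 0 \<le> bertrand \<epsilon> n"
  unfolding bertrand_def by auto

lemma bertrand_Suc_le: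
  assumes e: "\<epsilon> > 0" and m: "0 < m"
  shows "bertrand \<epsilon> (Suc m) \<le> bertrand \<epsilon> m"
proof (cases "m < 3")
  case True
  show ?thesis
  proof (cases "Suc m < 3")
    case True then show ?thesis using \<open>m<3\<close> by (simp add: bertrand_def)
  next
    case False
    then have sm: "Suc m = 3" using \<open>m < 3\<close> by simp
    have "1 \<le> ln (3::real) powr (1 + \<epsilon>)" using ln_3_gt_1 e by (intro ge_one_powr_ge_zero) auto
    then have "1 \<le> 3 * ln (3::real) powr (1 + \<epsilon>)" by linarith
    then have "bertrand \<epsilon> (Suc m) \<le> 1" unfolding sm bertrand_def by simp
    then show ?thesis using \<open>m < 3\<close> by (simp add: bertrand_def)
  qed
next
  case False
  then have m3: "3 \<le> m" by simp
  have l0: "0 < ln (real m)" using m3 by simp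
  have "ln (real m) powr (1 + \<epsilon>) \<le> ln (real (Suc m)) powr (1 + \<epsilon>)"
    using l0 e m3 by (intro powr_mono2) (auto intro!: ln_mono)
  moreover have "0 < ln (real m) powr (1 + \<epsilon>)" using l0 by simp
  ultimately have "real m * ln (real m) powr (1 + \<epsilon>) \<le> real (Suc m) * ln (real (Suc m)) powr (1 + \<epsilon>)"
    by (intro mult_mono) auto
  moreover have "0 < real m * ln (real m) powr (1 + \<epsilon>)" using l0 m3 by simp
  ultimately show ?thesis using m3 unfolding bertrand_def
    by (simp add: frac_le)
qed

lemma summable_bertrand:
  assumes e: "\<epsilon> > 0"
  shows "summable (bertrand \<epsilon>)"
proof -
  have "summable (\<lambda>n. (2::real)^n * bertrand \<epsilon> (2^n))"
  proof -
    have s: "summable (\<lambda>n. ln 2 powr (- (1 + \<epsilon>)) * real n powr (- (1 + \<epsilon>)))"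
      by (rule summable_mult) (use e in \<open>simp add: summable_real_powr_iff\<close>)
    have "eventually (\<lambda>n. (2::real)^n * bertrand \<epsilon> (2^n) = ln 2 powr (- (1 + \<epsilon>)) * real n powr (- (1 + \<epsilon>))) sequentially"
      using eventually_ge_at_top[of "2::nat"]
    proof eventually_elim
      case (elim n)
      have "(4::nat) \<le> 2^n" using power_increasing[OF elim, of "2::nat"] by simp
      then have n3: "\<not> (2::nat)^n < 3" by simp
      have ln: "ln (real (2^n)) = real n * ln 2" by (simp add: ln_realpow)
      have pos: "0 < real n" "0 < ln (2::real)" using elim by auto
      have "(2::real)^n * bertrand \<epsilon> (2^n) = 1 / ((real n * ln 2) powr (1 + \<epsilon>))"
        unfolding bertrand_def using n3 ln by simp
      also have "\<dots> = (real n * ln 2) powr (- (1 + \<epsilon>))" by (simp only: powr_minus_divide)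
      also have "\<dots> = ln 2 powr (- (1 + \<epsilon>)) * real n powr (- (1 + \<epsilon>))"
        using pos by (simp add: powr_mult)
      finally show ?case .
    qed
    then show ?thesis using s by (rule summable_cong[THEN iffD2])
  qed
  then show ?thesis
    using condensation_test[of "bertrand \<epsilon>"] bertrand_Suc_le[OF e] bertrand_nonneg[OF e] by blast
qed


lemma dyadic_pow4_exp_le:
  fixes \<theta> :: real and k D :: nat
  assumes th: "5 * ln 2 \<le> \<theta> * real D"
  shows "((2::real)^k)^4 * exp (- \<theta> * real (D * (k+1))) \<le> (1/2)^k"
proof -
  have "exp (real (4*k) * ln 2) = exp (ln 2) ^ (4*k)" by (rule exp_of_nat_mult)
  also have "\<dots> = ((2::real)^k)^4" by (simp add: power_mult[symmetric] mult.commute)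
  finally have a: "((2::real)^k)^4 = exp (4 * real k * ln 2)" by simp
  have b: "((1::real)/2)^k = exp (- real k * ln 2)"
  proof -
    have "exp (real k * ln 2) = exp (ln 2) ^ k" by (rule exp_of_nat_mult)
    then have "exp (real k * ln 2) = (2::real) ^ k" by simp
    then have "exp (- real k * ln 2) = inverse ((2::real)^k)" by (simp add: exp_minus)
    also have "\<dots> = 1 / 2^k" by (simp only: inverse_eq_divide)
    also have "\<dots> = (1/2)^k" by (simp only: power_one_over)
    finally show ?thesis by simp
  qed
  have "4 * real k * ln 2 + (- \<theta> * real (D * (k+1))) \<le> - real k * ln 2"
  proof -
    have "5 * ln 2 * real (k+1) \<le> \<theta> * real D * real (k+1)"
      by (rule mult_right_mono[OF th]) simp
    moreover have "0 \<le> ln (2::real)" by simp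
    ultimately show ?thesis by (simp add: algebra_simps, linarith)
  qed
  then have "exp (4 * real k * ln 2) * exp (- \<theta> * real (D * (k+1))) \<le> exp (- real k * ln 2)"
    by (simp add: exp_add[symmetric])
  then show ?thesis unfolding a b .
qed

lemma ln_dyadic_bounds:
  fixes k :: nat assumes k: "k \<ge> 5"
  shows "1 \<le> real (k+1) * ln 2" "1 \<le> ln (real (k+1) * ln 2)"
    "real (k+1) / 2 \<le> real (k+1) * ln 2" "ln (real (k+1)) / 2 \<le> ln (real (k+1) * ln 2)"
proof -
  have l2: "2/3 \<le> ln (2::real)" by (rule ln2_ge_two_thirds)
  have k6: "6 \<le> real (k+1)" using k by simp
  have a: "4 \<le> real (k+1) * ln 2" using mult_mono[OF k6 l2] by simp
  show "1 \<le> real (k+1) * ln 2" using a by simp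
  have "exp 1 \<le> real (k+1) * ln 2" using exp_le a by linarith
  then show "1 \<le> ln (real (k+1) * ln 2)" by (metis exp_gt_zero ln_exp ln_le_cancel_iff order_less_le_trans)
  show "real (k+1) / 2 \<le> real (k+1) * ln 2" using l2 by simp
  have sq: "sqrt (real (k+1)) \<le> real (k+1) * ln 2"
  proof -
    have s2: "2 \<le> sqrt (real (k+1))" using k6 by (simp add: real_le_rsqrt)
    have "1 \<le> sqrt (real (k+1)) * ln 2" using mult_mono[OF s2 l2] by simp
    then have "sqrt (real (k+1)) * 1 \<le> sqrt (real (k+1)) * (sqrt (real (k+1)) * ln 2)"
      by (intro mult_left_mono) auto
    then show ?thesis by (simp add: mult.assoc[symmetric])
  qed
  have "ln (sqrt (real (k+1))) \<le> ln (real (k+1) * ln 2)"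
    using sq k6 by (subst ln_le_cancel_iff) auto
  then show "ln (real (k+1)) / 2 \<le> ln (real (k+1) * ln 2)" by (simp add: ln_sqrt)
qed


lemma inverse_ln_dyadic_le_bertrand:
  fixes k :: nat
  assumes k: "k \<ge> 5" and eps: "\<epsilon> > 0"
  defines "lam \<equiv> real (k+1) * ln 2"
  shows "1 / (lam * ln lam powr (1 + \<epsilon>)) \<le> 2 * 2 powr (1 + \<epsilon>) * bertrand \<epsilon> (Suc k)"
proof -
  define Q where "Q = real (Suc k) * ln (real (Suc k)) powr (1 + \<epsilon>)"
  have lb: "1 \<le> lam" "1 \<le> ln lam" "real (k+1) / 2 \<le> lam" "ln (real (k+1)) / 2 \<le> ln lam"
    using ln_dyadic_bounds[OF k] unfolding lam_def by auto
  have lk: "0 < ln (real (Suc k))" using k by simp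
  have Q0: "0 < Q" unfolding Q_def using lk by simp
  have "(ln (real (k+1)) / 2) powr (1 + \<epsilon>) \<le> ln lam powr (1 + \<epsilon>)"
    using lb lk eps by (intro powr_mono2) auto
  then have "ln (real (k+1)) powr (1 + \<epsilon>) / 2 powr (1 + \<epsilon>) \<le> ln lam powr (1 + \<epsilon>)"
    using lk by (simp add: powr_divide)
  then have "(real (k+1) / 2) * (ln (real (k+1)) powr (1 + \<epsilon>) / 2 powr (1 + \<epsilon>)) \<le> lam * ln lam powr (1 + \<epsilon>)"
    using lb(3) lk by (intro mult_mono) auto
  then have QL: "Q / (2 * 2 powr (1 + \<epsilon>)) \<le> lam * ln lam powr (1 + \<epsilon>)"
    unfolding Q_def by simp
  have LP: "0 < lam * ln lam powr (1 + \<epsilon>)" using lb by (intro mult_pos_pos) auto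
  have "1 / (lam * ln lam powr (1 + \<epsilon>)) \<le> 1 / (Q / (2 * 2 powr (1 + \<epsilon>)))"
    using QL Q0 LP by (intro divide_left_mono) (auto simp: zero_less_mult_iff)
  also have "\<dots> = 2 * 2 powr (1 + \<epsilon>) * bertrand \<epsilon> (Suc k)"
    using k unfolding bertrand_def Q_def by simp
  finally show ?thesis .
qed

lemma first_term_le:
  fixes a c0 I lam L m :: real
  assumes "0 < c0" "1 \<le> lam" "1 \<le> L" "0 < m" and low: "c0 * lam^3 * L / (4 * m^2) \<le> I"
  shows "4 * (a * lam)^2 / (m^2 * I) \<le> 16 * a^2 / c0 / (lam * L)"
proof -
  have B: "0 < c0 * lam^3 * L / (4 * m^2)" using assms by simp
  then have "0 < I" using low by linarith
  with B have "4 * (a * lam)^2 / (m^2 * I) \<le> 4 * (a * lam)^2 / (m^2 * (c0 * lam^3 * L / (4 * m^2)))"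
    using low assms by (intro divide_left_mono mult_left_mono mult_pos_pos) auto
  also have "\<dots> = 16 * a^2 / c0 / (lam * L)"
    using assms by (simp add: field_simps power2_eq_square power3_eq_cube)
  finally show ?thesis .
qed

lemma second_term_le:
  fixes a c1 I lam L m s1 s2 :: real
  assumes "0 < I" "0 < m" "0 \<le> a" "1 \<le> lam" "1 \<le> L"
    and "s1 / I \<le> c1 * (2 * m) / (lam^2 * L)" "s2 / I \<le> c1 * (2 * m) / (lam^2 * L)"
  shows "4 * (a * lam) * (s1 + s2) / (m * I) \<le> 16 * c1 * a / (lam * L)"
proof -
  have "(s1 + s2) / I \<le> c1 * (2 * m) / (lam^2 * L) + c1 * (2 * m) / (lam^2 * L)"
    unfolding add_divide_distrib using assms(6,7) by (rule add_mono)
  also have "\<dots> = 4 * c1 * m / (lam^2 * L)" by (simp add: field_simps)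
  finally have "(s1 + s2) / I \<le> 4 * c1 * m / (lam^2 * L)" .
  then have "4 * (a * lam) / m * ((s1 + s2) / I) \<le> 4 * (a * lam) / m * (4 * c1 * m / (lam^2 * L))"
    using assms by (intro mult_left_mono) auto
  then show ?thesis
    using assms by (simp add: field_simps power2_eq_square)
qed

lemma third_term_le:
  fixes c0 E I lam L m :: real
  assumes "0 < c0" "1 \<le> lam" "1 \<le> L" "0 < m" "0 \<le> E" and low: "c0 * lam^3 * L / (4 * m^2) \<le> I"
  shows "2 * E / I^2 \<le> 32 * m^4 * E / c0^2"
proof -
  have "1 \<le> lam^3" using assms(2) by (simp add: one_le_power)
  then have "1 * 1 \<le> lam^3 * L" using assms(2,3) by (intro mult_mono) auto
  then have "c0 / (4 * m^2) \<le> c0 * lam^3 * L / (4 * m^2)"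
    using assms by (intro divide_right_mono) (auto simp: mult_le_cancel_left1)
  then have le: "c0 / (4 * m^2) \<le> I" using low by linarith
  have pos: "0 < c0 / (4 * m^2)" using assms by simp
  then have "0 < I" using le by linarith
  have "(c0 / (4 * m^2))^2 \<le> I^2" using le pos by (intro power_mono) auto
  then have "2 * E / I^2 \<le> 2 * E / (c0 / (4 * m^2))^2"
    using assms pos by (intro divide_left_mono mult_pos_pos) auto
  also have "\<dots> = 32 * m^4 * E / c0^2"
    using assms by (simp add: field_simps power2_eq_square power4_eq_xxxx)
  finally show ?thesis .
qed

section \<open>Summation over dyadic blocks\<close>

context mixing_pair
begin

definition radius_bounds :: "real \<Rightarrow> real \<Rightarrow> real \<Rightarrow> real \<Rightarrow> nat \<Rightarrow> bool" where
  "radius_bounds \<epsilon> c0 c1 \<rho> n \<longleftrightarrow>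
     c0 * ln (real n) ^ 3 * ln (ln (real n)) powr (1 + \<epsilon>) / real n ^ 2 \<le> ball_integral X M1 M2 \<rho> \<and>
     sqrt (ball_integral X M1 M1 \<rho>) / ball_integral X M1 M2 \<rho>
       \<le> c1 * real n / (ln (real n) ^ 2 * ln (ln (real n)) powr (1 + \<epsilon>)) \<and>
     sqrt (ball_integral X M2 M2 \<rho>) / ball_integral X M1 M2 \<rho>
       \<le> c1 * real n / (ln (real n) ^ 2 * ln (ln (real n)) powr (1 + \<epsilon>))"

lemma measure_miss_le_ball_integral:
  assumes "\<rho> > 0" "m > 0" "ball_integral X M1 M2 \<rho> > 0"
  shows "measure (M1 \<Otimes>\<^sub>M M2) (space (M1 \<Otimes>\<^sub>M M2) - E_set X T1 T2 m \<rho>)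
     \<le> 4 * real g ^ 2 / (real m ^ 2 * ball_integral X M1 M2 \<rho>)
       + 4 * real g * (sqrt (ball_integral X M1 M1 \<rho>) + sqrt (ball_integral X M2 M2 \<rho>))
           / (real m * ball_integral X M1 M2 \<rho>)
       + 2 * (C1 * exp (- \<theta>1 * real g) + C2 * exp (- \<theta>2 * real g)) / ball_integral X M1 M2 \<rho> ^ 2"
proof -
  interpret R: mixing_pair_radius X M1 T1 M2 T2 C1 \<theta>1 C2 \<theta>2 \<rho>
    by (intro mixing_pair_radius.intro mixing_pair_axioms mixing_pair_radius_axioms.intro assms(1))
  have "R.I = ball_integral X M1 M2 \<rho>" "R.J1 = ball_integral X M1 M1 \<rho>" "R.J2 = ball_integral X M2 M2 \<rho>"
    unfolding R.I_def R.J1_def R.J2_def R.h1_def R.h2_def ball_integral_def by simp_all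
  then show ?thesis
    using R.measure_miss_le[OF assms(2), of g] assms(3) unfolding R.mix_err1_def R.mix_err2_def by simp
qed

lemma radius_bounds_dyadic:
  fixes k :: nat
  assumes "radius_bounds \<epsilon> c0 c1 \<rho> (2 ^ Suc k)"
  defines "m \<equiv> (2::real) ^ k" and "lam \<equiv> real (k+1) * ln 2" and "L \<equiv> ln (real (k+1) * ln 2) powr (1 + \<epsilon>)"
  shows "c0 * lam^3 * L / (4 * m^2) \<le> ball_integral X M1 M2 \<rho>"
    "sqrt (ball_integral X M1 M1 \<rho>) / ball_integral X M1 M2 \<rho> \<le> c1 * (2 * m) / (lam^2 * L)"
    "sqrt (ball_integral X M2 M2 \<rho>) / ball_integral X M1 M2 \<rho> \<le> c1 * (2 * m) / (lam^2 * L)"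
proof -
  have n: "real ((2::nat) ^ Suc k) = 2 * m" unfolding m_def by simp
  have ln_n: "ln (2 * m) = lam" using ln_realpow[of 2 "k+1"] unfolding m_def lam_def by simp
  show "c0 * lam^3 * L / (4 * m^2) \<le> ball_integral X M1 M2 \<rho>"
    "sqrt (ball_integral X M1 M1 \<rho>) / ball_integral X M1 M2 \<rho> \<le> c1 * (2 * m) / (lam^2 * L)"
    "sqrt (ball_integral X M2 M2 \<rho>) / ball_integral X M1 M2 \<rho> \<le> c1 * (2 * m) / (lam^2 * L)"
    using assms(1) unfolding radius_bounds_def n ln_n L_def lam_def[symmetric] by (simp_all add: power2_eq_square)
qed

lemma measure_miss_dyadic_le:
  fixes D k :: nat
  assumes D: "5 * ln 2 \<le> \<theta>1 * real D" "5 * ln 2 \<le> \<theta>2 * real D"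
    and pos: "\<epsilon> > 0" "c0 > 0" "c1 > 0" "\<rho> > 0" and k: "k \<ge> 5"
    and bounds: "radius_bounds \<epsilon> c0 c1 \<rho> (2 ^ Suc k)"
  shows "measure (M1 \<Otimes>\<^sub>M M2) (space (M1 \<Otimes>\<^sub>M M2) - E_set X T1 T2 (2 ^ k) \<rho>)
    \<le> (16 * (real D / ln 2)^2 / c0 + 16 * c1 * (real D / ln 2)) * (2 * 2 powr (1 + \<epsilon>)) * bertrand \<epsilon> (Suc k)
      + 32 * (C1 + C2) / c0^2 * (1/2)^k"
proof -
  define m :: real where "m = 2 ^ k"
  define lam where "lam = real (k+1) * ln 2"
  define L where "L = ln lam powr (1 + \<epsilon>)"
  define a where "a = real D / ln 2"
  define E where "E = C1 * exp (- \<theta>1 * real (D * Suc k)) + C2 * exp (- \<theta>2 * real (D * Suc k))"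
  define I where "I = ball_integral X M1 M2 \<rho>"
  have m: "real ((2::nat) ^ k) = m" "0 < m" unfolding m_def by simp_all
  have lam: "1 \<le> lam" "1 \<le> ln lam" using ln_dyadic_bounds[OF k] unfolding lam_def by auto
  have L: "1 \<le> L" unfolding L_def using lam pos by (intro ge_one_powr_ge_zero) auto
  have low: "c0 * lam^3 * L / (4 * m^2) \<le> I"
    and ratio1: "sqrt (ball_integral X M1 M1 \<rho>) / I \<le> c1 * (2 * m) / (lam^2 * L)"
    and ratio2: "sqrt (ball_integral X M2 M2 \<rho>) / I \<le> c1 * (2 * m) / (lam^2 * L)"
    using radius_bounds_dyadic[OF bounds] unfolding I_def L_def lam_def m_def by simp_all
  have "0 < c0 * lam^3 * L / (4 * m^2)" using pos m lam L by simp
  then have I: "0 < I" using low by linarith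
  have g: "real (D * Suc k) = a * lam" unfolding a_def lam_def by (simp add: algebra_simps)
  have E: "0 \<le> E" "m^4 * E \<le> (C1 + C2) * (1/2)^k"
    using C_pos dyadic_pow4_exp_le[OF D(1), of k] dyadic_pow4_exp_le[OF D(2), of k]
    unfolding E_def m_def by (auto simp: distrib_left algebra_simps intro!: add_mono)
  have "measure (M1 \<Otimes>\<^sub>M M2) (space (M1 \<Otimes>\<^sub>M M2) - E_set X T1 T2 (2 ^ k) \<rho>)
      \<le> 4 * (a * lam)^2 / (m^2 * I)
        + 4 * (a * lam) * (sqrt (ball_integral X M1 M1 \<rho>) + sqrt (ball_integral X M2 M2 \<rho>)) / (m * I)
        + 2 * E / I^2"
    using measure_miss_le_ball_integral[OF pos(4) _ I[unfolded I_def], of "2 ^ k" "D * Suc k"]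
    unfolding m(1) g E_def I_def by simp
  also have "\<dots> \<le> 16 * a^2 / c0 / (lam * L) + 16 * c1 * a / (lam * L) + 32 * m^4 * E / c0^2"
    using first_term_le[OF pos(2) lam(1) L m(2) low, of a] second_term_le[OF I m(2) _ lam(1) L ratio1 ratio2, of a]
      third_term_le[OF pos(2) lam(1) L m(2) E(1) low]
    unfolding a_def by (intro add_mono) auto
  also have "\<dots> \<le> (16 * a^2 / c0 + 16 * c1 * a) * (2 * 2 powr (1 + \<epsilon>) * bertrand \<epsilon> (Suc k))
      + 32 * (C1 + C2) / c0^2 * (1/2)^k"
  proof (rule add_mono)
    have nonneg: "0 \<le> 16 * a^2 / c0 + 16 * c1 * a" using pos unfolding a_def by simp
    have "16 * a^2 / c0 / (lam * L) + 16 * c1 * a / (lam * L) = (16 * a^2 / c0 + 16 * c1 * a) * (1 / (lam * L))"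
      by (simp add: add_divide_distrib)
    also have "\<dots> \<le> (16 * a^2 / c0 + 16 * c1 * a) * (2 * 2 powr (1 + \<epsilon>) * bertrand \<epsilon> (Suc k))"
      using inverse_ln_dyadic_le_bertrand[OF k pos(1)] unfolding L_def lam_def
      by (rule mult_left_mono[OF _ nonneg])
    finally show "16 * a^2 / c0 / (lam * L) + 16 * c1 * a / (lam * L)
        \<le> (16 * a^2 / c0 + 16 * c1 * a) * (2 * 2 powr (1 + \<epsilon>) * bertrand \<epsilon> (Suc k))" .
    have "32 * m^4 * E / c0^2 \<le> 32 * ((C1 + C2) * (1/2)^k) / c0^2"
      using E by (intro divide_right_mono) auto
    also have "\<dots> = 32 * (C1 + C2) / c0^2 * (1/2)^k" by simp
    finally show "32 * m^4 * E / c0^2 \<le> 32 * (C1 + C2) / c0^2 * (1/2)^k" .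
  qed
  finally show ?thesis unfolding a_def by (simp only: mult.assoc)
qed

lemma summable_measure_miss_dyadic:
  assumes pos: "\<epsilon> > 0" "c0 > 0" "c1 > 0" "\<And>k. \<rho> k > 0"
    and bounds: "\<And>k. K \<le> k \<Longrightarrow> radius_bounds \<epsilon> c0 c1 (\<rho> k) (2 ^ Suc k)"
  shows "summable (\<lambda>k. measure (M1 \<Otimes>\<^sub>M M2) (space (M1 \<Otimes>\<^sub>M M2) - E_set X T1 T2 (2 ^ k) (\<rho> k)))"
proof -
  obtain D :: nat where "max (5 * ln 2 / \<theta>1) (5 * ln 2 / \<theta>2) \<le> real D"
    using real_arch_simple by blast
  then have D: "5 * ln 2 \<le> \<theta>1 * real D" "5 * ln 2 \<le> \<theta>2 * real D"
    using \<theta>_pos by (auto simp: divide_le_eq mult.commute)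
  define A where "A = (16 * (real D / ln 2)^2 / c0 + 16 * c1 * (real D / ln 2)) * (2 * 2 powr (1 + \<epsilon>))"
  have "summable (\<lambda>k. A * bertrand \<epsilon> (Suc k) + 32 * (C1 + C2) / c0^2 * (1/2)^k)"
    by (intro summable_add summable_mult)
       (auto simp: summable_Suc_iff[where f="bertrand \<epsilon>"] summable_bertrand[OF pos(1)] summable_geometric)
  moreover have "eventually (\<lambda>k. norm (measure (M1 \<Otimes>\<^sub>M M2) (space (M1 \<Otimes>\<^sub>M M2) - E_set X T1 T2 (2 ^ k) (\<rho> k)))
      \<le> A * bertrand \<epsilon> (Suc k) + 32 * (C1 + C2) / c0^2 * (1/2)^k) sequentially"
    using eventually_ge_at_top[of "max K 5"]
    by eventually_elim (use measure_miss_dyadic_le[OF D pos(1-3,4)] bounds in \<open>auto simp: A_def\<close>)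
  ultimately show ?thesis by (rule summable_comparison_test_ev[rotated])
qed

end

lemma E_set_mono: "m1 \<le> m2 \<Longrightarrow> \<rho>1 \<le> \<rho>2 \<Longrightarrow> E_set X T1 T2 m1 \<rho>1 \<subseteq> E_set X T1 T2 m2 \<rho>2"
  unfolding E_set_def by clarsimp (metis order_less_le_trans)

lemma in_liminf_E_set_of_dyadic:
  assumes r_dec: "decseq r" and ev: "eventually (\<lambda>k. z \<in> E_set X T1 T2 (2 ^ k) (r (2 ^ Suc k))) sequentially"
  shows "z \<in> (\<Union>N. \<Inter>n\<in>{N..}. E_set X T1 T2 n (r n))"
proof -
  obtain K where K: "\<And>k. k \<ge> K \<Longrightarrow> z \<in> E_set X T1 T2 (2 ^ k) (r (2 ^ Suc k))"
    using ev unfolding eventually_sequentially by blast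
  have "z \<in> E_set X T1 T2 n (r n)" if n: "n \<ge> 2 ^ K" for n
  proof -
    have "1 \<le> n" using n one_le_power[of "2::nat" K] by linarith
    then obtain k where k: "2 ^ k \<le> n" "n < 2 ^ Suc k" using ex_power_ivl1[of 2 n] by auto
    have "K \<le> k"
    proof (rule ccontr)
      assume "\<not> K \<le> k"
      then have "(2::nat) ^ Suc k \<le> 2 ^ K" by (intro power_increasing) auto
      then show False using k(2) n by simp
    qed
    then have "z \<in> E_set X T1 T2 (2 ^ k) (r (2 ^ Suc k))" by (rule K)
    moreover have "r (2 ^ Suc k) \<le> r n" using r_dec k(2) unfolding decseq_def by simp
    ultimately show ?thesis using E_set_mono[OF k(1)] by blast
  qed
  then show ?thesis by blast
qed

theorem mainTheorem3:
  fixes X :: "real set" and M1 M2 :: "real measure" and T1 T2 :: "real \<Rightarrow> real"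
    and r :: "nat \<Rightarrow> real" and \<epsilon> c0 c1 :: real
  assumes sp1: "space M1 = X" and sets1: "sets M1 = sets (restrict_space borel X)"
    and sp2: "space M2 = X" and sets2: "sets M2 = sets (restrict_space borel X)"
    and prob1: "prob_space M1" and prob2: "prob_space M2"
    and mp1: "measure_preserving_map M1 T1" and mp2: "measure_preserving_map M2 T2"
    and mix1: "exp_mixing_BV_Linf X M1 T1" and mix2: "exp_mixing_BV_Linf X M2 T2"
    and r_pos: "\<And>n. r n > 0" and r_dec: "decseq r"
    and eps: "\<epsilon> > 0" and c0: "c0 > 0" and c1: "c1 > 0"
    and lower: "eventually (\<lambda>n. (\<integral>y. measure M1 (ball y (r n) \<inter> X) \<partial>M2)
        \<ge> c0 * (ln (real n)) ^ 3 * (ln (ln (real n))) powr (1 + \<epsilon>) / (real n)^2) sequentially"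
    and ratio1: "eventually (\<lambda>n. sqrt (\<integral>y. measure M1 (ball y (r n) \<inter> X) \<partial>M1)
          / (\<integral>y. measure M1 (ball y (r n) \<inter> X) \<partial>M2)
        \<le> c1 * real n / ((ln (real n)) ^ 2 * (ln (ln (real n))) powr (1 + \<epsilon>))) sequentially"
    and ratio2: "eventually (\<lambda>n. sqrt (\<integral>y. measure M2 (ball y (r n) \<inter> X) \<partial>M2)
          / (\<integral>y. measure M1 (ball y (r n) \<inter> X) \<partial>M2)
        \<le> c1 * real n / ((ln (real n)) ^ 2 * (ln (ln (real n))) powr (1 + \<epsilon>))) sequentially"
  shows "measure (M1 \<Otimes>\<^sub>M M2) (\<Union>N. \<Inter>n\<in>{N..}. E_set X T1 T2 n (r n)) = 1"
proof -
  interpret S1: real_mps X M1 T1 by (intro real_mps.intro sp1 sets1 prob1 mp1)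
  interpret S2: real_mps X M2 T2 by (intro real_mps.intro sp2 sets2 prob2 mp2)
  obtain C1 \<theta>1 C2 \<theta>2 where "mixing_pair X M1 T1 M2 T2 C1 \<theta>1 C2 \<theta>2"
    by (rule S1.mixing_unit_mono_diff[OF mix1], rule S2.mixing_unit_mono_diff[OF mix2])
       (rule that, rule mixing_pair.intro[OF S1.real_mps_axioms S2.real_mps_axioms mixing_pair_axioms.intro];
        assumption)
  then interpret mixing_pair X M1 T1 M2 T2 C1 \<theta>1 C2 \<theta>2 .
  let ?P = "M1 \<Otimes>\<^sub>M M2"
  have "eventually (\<lambda>n. radius_bounds \<epsilon> c0 c1 (r n) n) sequentially"
    using lower ratio1 ratio2 unfolding radius_bounds_def ball_integral_def by eventually_elim simp
  then obtain N where N: "\<And>n. N \<le> n \<Longrightarrow> radius_bounds \<epsilon> c0 c1 (r n) n"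
    unfolding eventually_sequentially by blast
  have dyadic: "radius_bounds \<epsilon> c0 c1 (r (2 ^ Suc k)) (2 ^ Suc k)" if "N \<le> k" for k
    using that less_exp[of "Suc k"] by (intro N) linarith
  have "summable (\<lambda>k. measure ?P (space ?P - E_set X T1 T2 (2 ^ k) (r (2 ^ Suc k))))"
    using eps c0 c1 r_pos dyadic by (rule summable_measure_miss_dyadic)
  then have "AE z in ?P. eventually (\<lambda>k. z \<in> space ?P - (space ?P - E_set X T1 T2 (2 ^ k) (r (2 ^ Suc k))))
      sequentially"
    by (intro borel_cantelli_AE1) (auto simp: less_top[symmetric])
  then have "AE z in ?P. eventually (\<lambda>k. z \<in> E_set X T1 T2 (2 ^ k) (r (2 ^ Suc k))) sequentially"
    by eventually_elim (erule eventually_mono; simp)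
  then have "AE z in ?P. z \<in> (\<Union>N. \<Inter>n\<in>{N..}. E_set X T1 T2 n (r n))"
    by eventually_elim (rule in_liminf_E_set_of_dyadic[OF r_dec])
  moreover have "(\<Union>N. \<Inter>n\<in>{N..}. E_set X T1 T2 n (r n)) \<in> sets ?P" by measurable
  ultimately show ?thesis by (simp add: P.prob_eq_1)
qed

end
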